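(* If $p,q\in\mathbb{C}[\lambda]$, then for all $m\in\mathcal{A}$ and $u,v\in\mathcal{A}\bar\otimes\mathcal{A}^{\mathrm{op}}$, \[ \Delta_{u,v}(pq)(m)=\Delta_{u,v}p(m)\,q(m)+p(m)\,\Delta_{u,v}q(m)+Q_\tau(\partial p(m)\,u,\partial q(m)\,v)+Q_\tau(\partial p(m)\,v,\partial q(m)\,u). \]
   Context: $(\mathcal{A},\tau)$ is a von Neumann algebra with faithful normal tracial state $\tau$; $\mathcal{A}^{\mathrm{op}}$ is its opposite algebra; $\mathcal{A}\bar\otimes\mathcal{A}^{\mathrm{op}}$ the von Neumann tensor product with trace $\tau\bar\otimes\tau^{\mathrm{op}}$ (products such as $\partial p(m)u$ are taken there); $(a\otimes b)^{\mathrm{flip}}=b\otimes a$ extended $\sigma$-weakly continuously. For $u,v\in\mathcal{A}\bar\otimes\mathcal{A}^{\mathrm{op}}$, $Q_\tau(u,v)$ is the unique element of $\mathcal{A}$ with $\tau(aQ_\tau(u,v))=(\tau\bar\otimes\tau^{\mathrm{op}})((a\otimes1)uv^{\mathrm{flip}})$ for all $a\in\mathcal{A}$. For $p(\lambda)=\sum_ic_i\lambda^i$: $\partial p(m)=\sum_ic_i\sum_{\delta_1+\delta_2=i-1}m^{\delta_1}\otimes m^{\delta_2}$, and $\Delta_{u,v}p(m)$ is the unique element of $\mathcal{A}$ such that for all $a\in\mathcal{A}$ \[ \tau(a\,\Delta_{u,v}p(m))=\sum_ic_i\sum_{\delta_1+\delta_2+\delta_3=i-2}(\tau\bar\otimes\tau^{\mathrm{op}})\big((a\otimes1)(m\otimes1)^{\delta_1}(uv^{\mathrm{flip}}+vu^{\mathrm{flip}})(1\otimes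 m)^{\delta_2}(m\otimes1)^{\delta_3}\big). \] *)

theory Defs
  imports Complex_Main "HOL-Computational_Algebra.Polynomial"
begin

text \<open>Abstract (algebraic) rendering of the standing setting: a complex *-algebra 'a
 (complex scalars via a central unital ring homomorphism emb) with a faithful tracial
 state tau, and an algebra 'b standing for the von Neumann tensor product of 'a with
 its opposite algebra, with the elementary tensors tens a b (so that
 tens a b * tens c d = tens (a*c) (d*b)), the flip map and the trace Tr = tau (x) tau^op.
 The last axiom is the existence of the elements whose uniqueness (from faithfulness)
 makes Q_tau and Delta well defined.\<close>

definition tracial_tensor_setting ::
  "(complex \<Rightarrow> 'a::ring_1) \<Rightarrow> ('a \<Rightarrow> 'a) \<Rightarrow> ('a \<Rightarrow> complex) \<Rightarrow>
   ('a \<Rightarrow> 'a \<Rightarrow> 'b::ring_1) \<Rightarrow> ('b \<Rightarrow> 'b) \<Rightarrow> ('b \<Rightarrow> complex) \<Rightarrow> bool" where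
  "tracial_tensor_setting emb st \<tau> tens flip Tr \<longleftrightarrow>
     \<comment> \<open>complex algebra structure\<close>
     (\<forall>a b. emb (a + b) = emb a + emb b) \<and>
     (\<forall>a b. emb (a * b) = emb a * emb b) \<and>
     emb 1 = 1 \<and>
     (\<forall>c x. emb c * x = x * emb c) \<and>
     \<comment> \<open>involution\<close>
     (\<forall>x y. st (x + y) = st x + st y) \<and>
     (\<forall>x y. st (x * y) = st y * st x) \<and>
     (\<forall>x. st (st x) = x) \<and>
     (\<forall>c. st (emb c) = emb (cnj c)) \<and>
     \<comment> \<open>faithful tracial state\<close>
     (\<forall>x y. \<tau> (x + y) = \<tau> x + \<tau> y) \<and>
     (\<forall>c x. \<tau> (emb c * x) = c * \<tau> x) \<and>
     \<tau> 1 = 1 \<and>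
     (\<forall>x y. \<tau> (x * y) = \<tau> (y * x)) \<and>
     (\<forall>x. Im (\<tau> (st x * x)) = 0 \<and> Re (\<tau> (st x * x)) \<ge> 0) \<and>
     (\<forall>x. \<tau> (st x * x) = 0 \<longrightarrow> x = 0) \<and>
     \<comment> \<open>elementary tensors in A (x) A^op\<close>
     (\<forall>x y z. tens (x + y) z = tens x z + tens y z) \<and>
     (\<forall>x y z. tens x (y + z) = tens x y + tens x z) \<and>
     (\<forall>c x y. tens (emb c * x) y = tens x (emb c * y)) \<and>
     tens 1 1 = 1 \<and>
     (\<forall>a b c d. tens a b * tens c d = tens (a * c) (d * b)) \<and>
     (\<forall>c z. tens (emb c) 1 * z = z * tens (emb c) 1) \<and>
     \<comment> \<open>flip\<close>
     (\<forall>x y. flip (x + y) = flip x + flip y) \<and>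
     (\<forall>a b. flip (tens a b) = tens b a) \<and>
     (\<forall>x y. flip (x * y) = flip y * flip x) \<and>
     (\<forall>x. flip (flip x) = x) \<and>
     \<comment> \<open>trace tau (x) tau^op\<close>
     (\<forall>x y. Tr (x + y) = Tr x + Tr y) \<and>
     (\<forall>c z. Tr (tens (emb c) 1 * z) = c * Tr z) \<and>
     (\<forall>a b. Tr (tens a b) = \<tau> a * \<tau> b) \<and>
     (\<forall>x y. Tr (x * y) = Tr (y * x)) \<and>
     \<comment> \<open>existence of the representing elements (conditional expectation)\<close>
     (\<forall>X. \<exists>x. \<forall>a. \<tau> (a * x) = Tr (tens a 1 * X))"

definition peval :: "(complex \<Rightarrow> 'a::ring_1) \<Rightarrow> complex poly \<Rightarrow> 'a \<Rightarrow> 'a" where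
  "peval emb p m = (\<Sum>i\<le>degree p. emb (coeff p i) * m ^ i)"

definition pdiff :: "(complex \<Rightarrow> 'a::ring_1) \<Rightarrow> ('a \<Rightarrow> 'a \<Rightarrow> 'b::ring_1) \<Rightarrow> complex poly \<Rightarrow> 'a \<Rightarrow> 'b" where
  "pdiff emb tens p m =
     (\<Sum>i\<le>degree p. \<Sum>(d1, d2)\<in>{(x, y). x + y + 1 = i}. tens (emb (coeff p i) * m ^ d1) (m ^ d2))"

definition Qtau :: "('a::ring_1 \<Rightarrow> complex) \<Rightarrow> ('b::ring_1 \<Rightarrow> complex) \<Rightarrow> ('a \<Rightarrow> 'a \<Rightarrow> 'b) \<Rightarrow> ('b \<Rightarrow> 'b) \<Rightarrow> 'b \<Rightarrow> 'b \<Rightarrow> 'a" where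
  "Qtau \<tau> Tr tens flip u v = (THE x. \<forall>a. \<tau> (a * x) = Tr (tens a 1 * u * flip v))"

definition Delta :: "('a::ring_1 \<Rightarrow> complex) \<Rightarrow> ('b::ring_1 \<Rightarrow> complex) \<Rightarrow> ('a \<Rightarrow> 'a \<Rightarrow> 'b) \<Rightarrow> ('b \<Rightarrow> 'b) \<Rightarrow>
    'b \<Rightarrow> 'b \<Rightarrow> complex poly \<Rightarrow> 'a \<Rightarrow> 'a" where
  "Delta \<tau> Tr tens flip u v p m = (THE x. \<forall>a. \<tau> (a * x) =
     (\<Sum>i\<le>degree p. coeff p i *
        (\<Sum>(d1, d2, d3)\<in>{(x, y, z). x + y + z + 2 = i}.
           Tr (tens a 1 * (tens m 1) ^ d1 * (u * flip v + v * flip u) * (tens 1 m) ^ d2 * (tens m 1) ^ d3))))"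

end

theory Submission
  imports Defs
begin

(* Let E : A (x) A^op -> A be the conditional expectation, tau(a E(X)) = Tr((a (x) 1) X).
   Both Delta_{u,v} p(m) and Q_tau(u, v) = E(u v^flip) are images under E of sums of elementary
   tensors. Since E(a (x) b . X . c (x) d) = a E(X . 1 (x) bd) c, every term becomes
   m^d1 y(d2) m^d3 with y(k) = E(W . 1 (x) m^k) and W = u v^flip + v u^flip, weighted by
   coefficients of p and q. The Leibniz rule is then purely combinatorial: a triple with
   d1 + d2 + d3 = i + j - 2 has d3 >= j (a term of Delta p . q(m)), or d1 >= i (a term of
   p(m) . Delta q), or else its middle block straddles the cut between the first i and the
   last j positions (a term of the two Q_tau's). *)

definition split_pairs :: "nat \<Rightarrow> (nat \<times> nat) set" where
  "split_pairs n = {(x, y). x + y + 1 = n}"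

definition split_triples :: "nat \<Rightarrow> (nat \<times> nat \<times> nat) set" where
  "split_triples n = {(x, y, z). x + y + z + 2 = n}"

lemma finite_split_pairs [simp]: "finite (split_pairs n)"
  by (rule finite_subset[of _ "{..n} \<times> {..n}"]) (auto simp: split_pairs_def)

lemma finite_split_triples [simp]: "finite (split_triples n)"
  by (rule finite_subset[of _ "{..n} \<times> {..n} \<times> {..n}"]) (auto simp: split_triples_def)

lemma sum_split_triples_add:
  fixes G :: "nat \<Rightarrow> nat \<Rightarrow> nat \<Rightarrow> 'c::comm_monoid_add"
  shows "(\<Sum>(d1, d2, d3)\<in>split_triples (i + j). G d1 d2 d3) =
      (\<Sum>(d1, d2, d3)\<in>split_triples i. G d1 d2 (d3 + j))
    + (\<Sum>(d1, d2, d3)\<in>split_triples j. G (i + d1) d2 d3)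
    + (\<Sum>(e1, e2)\<in>split_pairs i. \<Sum>(f1, f2)\<in>split_pairs j. G e1 (e2 + f1) f2)"
proof -
  let ?G = "\<lambda>(d1, d2, d3). G d1 d2 d3"
  define A where "A = {(d1, d2, d3) \<in> split_triples (i + j). j \<le> d3}"
  define B where "B = {(d1, d2, d3) \<in> split_triples (i + j). i \<le> d1}"
  define C where "C = {(d1, d2, d3) \<in> split_triples (i + j). d1 < i \<and> d3 < j}"
  have "split_triples (i + j) = A \<union> B \<union> C"
    by (auto simp: A_def B_def C_def)
  moreover have "A \<inter> B = {}" "(A \<union> B) \<inter> C = {}"
    by (auto simp: A_def B_def C_def split_triples_def)
  moreover have "finite A" "finite B" "finite C"
    by (auto simp: A_def B_def C_def intro: finite_subset[OF _ finite_split_triples[of "i + j"]])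
  ultimately have "sum ?G (split_triples (i + j)) = sum ?G A + sum ?G B + sum ?G C"
    by (simp add: sum.union_disjoint)
  also have "sum ?G A = (\<Sum>(d1, d2, d3)\<in>split_triples i. G d1 d2 (d3 + j))"
    by (rule sum.reindex_bij_witness[where i = "\<lambda>(d1, d2, d3). (d1, d2, d3 + j)"
          and j = "\<lambda>(d1, d2, d3). (d1, d2, d3 - j)"])
       (auto simp: A_def split_triples_def)
  also have "sum ?G B = (\<Sum>(d1, d2, d3)\<in>split_triples j. G (i + d1) d2 d3)"
    by (rule sum.reindex_bij_witness[where i = "\<lambda>(d1, d2, d3). (i + d1, d2, d3)"
          and j = "\<lambda>(d1, d2, d3). (d1 - i, d2, d3)"])
       (auto simp: B_def split_triples_def)
  also have "sum ?G C = (\<Sum>((e1, e2), (f1, f2))\<in>split_pairs i \<times> split_pairs j. G e1 (e2 + f1) f2)"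
    by (rule sum.reindex_bij_witness[where i = "\<lambda>((e1, e2), (f1, f2)). (e1, e2 + f1, f2)"
          and j = "\<lambda>(d1, d2, d3). ((d1, i - 1 - d1), (d2 - (i - 1 - d1), d3))"])
       (auto simp: C_def split_triples_def split_pairs_def)
  finally show ?thesis
    by (simp add: sum.cartesian_product split_def)
qed

locale central_embedding =
  fixes emb :: "complex \<Rightarrow> 'a::ring_1"
  assumes emb_add: "emb (c + d) = emb c + emb d"
    and emb_mult: "emb (c * d) = emb c * emb d"
    and emb_central: "emb c * x = x * emb c"
begin

lemma emb_0 [simp]: "emb 0 = 0"
  using emb_add[of 0 0] by simp

lemma emb_sum: "emb (\<Sum>s\<in>S. f s) = (\<Sum>s\<in>S. emb (f s))"
  by (induction S rule: infinite_finite_induct) (simp_all add: emb_add)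

lemma mult_emb_left_commute: "x * (emb c * y) = emb c * (x * y)"
  by (metis emb_central mult.assoc)

lemma sum_coeff_mult:
  "(\<Sum>n\<le>degree (p * q). emb (coeff (p * q) n) * Y n) =
   (\<Sum>i\<le>degree p. \<Sum>j\<le>degree q. emb (coeff p i) * emb (coeff q j) * Y (i + j))"
proof -
  let ?f = "\<lambda>i j. emb (coeff p i) * emb (coeff q j) * Y (i + j)"
  have "(\<Sum>n\<le>degree (p * q). emb (coeff (p * q) n) * Y n) =
      (\<Sum>n\<le>degree p + degree q. emb (coeff (p * q) n) * Y n)"
    using degree_mult_le[of p q] by (intro sum.mono_neutral_left) (auto simp: coeff_eq_0)
  also have "\<dots> = (\<Sum>n\<le>degree p + degree q. \<Sum>i\<le>n. ?f i (n - i))"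
    by (simp add: coeff_mult emb_sum emb_mult sum_distrib_right)
  also have "\<dots> = (\<Sum>(i, j)\<in>{(i, j). i + j \<le> degree p + degree q}. ?f i j)"
    by (rule sum.triangle_reindex_eq[symmetric])
  also have "\<dots> = (\<Sum>(i, j)\<in>{..degree p} \<times> {..degree q}. ?f i j)"
  proof (rule sum.mono_neutral_right)
    show "finite {(i, j). i + j \<le> degree p + degree q}"
      by (rule finite_subset[of _ "{..degree p + degree q} \<times> {..degree p + degree q}"]) auto
    have "?f i j = 0" if "\<not> (i \<le> degree p \<and> j \<le> degree q)" for i j
      using that by (auto simp: coeff_eq_0)
    then show "\<forall>x\<in>{(i, j). i + j \<le> degree p + degree q} - {..degree p} \<times> {..degree q}.
        (case x of (i, j) \<Rightarrow> ?f i j) = 0"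
      by auto
  qed auto
  also have "\<dots> = (\<Sum>i\<le>degree p. \<Sum>j\<le>degree q. ?f i j)"
    by (simp add: sum.cartesian_product)
  finally show ?thesis .
qed

text \<open>Delta with the middle factor E(W (1 (x) m^k)) replaced by an arbitrary y k.\<close>

definition Delta_sum :: "(nat \<Rightarrow> 'a) \<Rightarrow> complex poly \<Rightarrow> 'a \<Rightarrow> 'a" where
  "Delta_sum y p m = (\<Sum>i\<le>degree p. emb (coeff p i) *
      (\<Sum>(d1, d2, d3)\<in>split_triples i. m ^ d1 * y d2 * m ^ d3))"

definition Q_sum :: "(nat \<Rightarrow> 'a) \<Rightarrow> complex poly \<Rightarrow> complex poly \<Rightarrow> 'a \<Rightarrow> 'a" where
  "Q_sum y p q m = (\<Sum>i\<le>degree p. \<Sum>j\<le>degree q. emb (coeff p i) * emb (coeff q j) *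
      (\<Sum>(e1, e2)\<in>split_pairs i. \<Sum>(f1, f2)\<in>split_pairs j. m ^ e1 * y (e2 + f1) * m ^ f2))"

lemma Delta_sum_mult:
  "Delta_sum y (p * q) m =
     Delta_sum y p m * peval emb q m + peval emb p m * Delta_sum y q m + Q_sum y p q m"
proof -
  define G where "G d1 d2 d3 = m ^ d1 * y d2 * m ^ d3" for d1 d2 d3
  let ?c = "\<lambda>i. emb (coeff p i)" and ?d = "\<lambda>j. emb (coeff q j)"
  let ?S = "\<lambda>n. \<Sum>(d1, d2, d3)\<in>split_triples n. G d1 d2 d3"
  have move_emb: "a * x * (emb c * z) = a * emb c * (x * z)" for a x z c
    by (simp add: mult.assoc mult_emb_left_commute[of x])
  have shift_right: "?S i * m ^ j = (\<Sum>(d1, d2, d3)\<in>split_triples i. G d1 d2 (d3 + j))" for i j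
    by (simp add: G_def sum_distrib_right power_add mult.assoc split_def)
  have shift_left: "m ^ i * ?S j = (\<Sum>(d1, d2, d3)\<in>split_triples j. G (i + d1) d2 d3)" for i j
    by (simp add: G_def sum_distrib_left mult.assoc[symmetric] power_add[symmetric] split_def)
  have "Delta_sum y p m * peval emb q m = (\<Sum>i\<le>degree p. \<Sum>j\<le>degree q. ?c i * ?S i * (?d j * m ^ j))"
    by (simp add: Delta_sum_def peval_def G_def sum_product)
  also have "\<dots> = (\<Sum>i\<le>degree p. \<Sum>j\<le>degree q. ?c i * ?d j * (?S i * m ^ j))"
    by (simp only: move_emb)
  finally have right: "Delta_sum y p m * peval emb q m =
      (\<Sum>i\<le>degree p. \<Sum>j\<le>degree q. ?c i * ?d j * (\<Sum>(d1, d2, d3)\<in>split_triples i. G d1 d2 (d3 + j)))"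
    by (simp only: shift_right)
  have "peval emb p m * Delta_sum y q m = (\<Sum>i\<le>degree p. \<Sum>j\<le>degree q. ?c i * m ^ i * (?d j * ?S j))"
    by (simp add: Delta_sum_def peval_def G_def sum_product)
  also have "\<dots> = (\<Sum>i\<le>degree p. \<Sum>j\<le>degree q. ?c i * ?d j * (m ^ i * ?S j))"
    by (simp only: move_emb)
  finally have left: "peval emb p m * Delta_sum y q m =
      (\<Sum>i\<le>degree p. \<Sum>j\<le>degree q. ?c i * ?d j * (\<Sum>(d1, d2, d3)\<in>split_triples j. G (i + d1) d2 d3))"
    by (simp only: shift_left)
  have "Delta_sum y (p * q) m = (\<Sum>i\<le>degree p. \<Sum>j\<le>degree q. ?c i * ?d j * ?S (i + j))"
    unfolding Delta_sum_def G_def by (rule sum_coeff_mult)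
  also have "\<dots> = Delta_sum y p m * peval emb q m + peval emb p m * Delta_sum y q m + Q_sum y p q m"
    unfolding right left Q_sum_def sum_split_triples_add G_def
    by (simp add: distrib_left sum.distrib)
  finally show ?thesis .
qed

end

locale tracial_tensor = central_embedding emb
  for emb :: "complex \<Rightarrow> 'a::ring_1" +
  fixes st :: "'a \<Rightarrow> 'a" and \<tau> :: "'a \<Rightarrow> complex"
    and tens :: "'a \<Rightarrow> 'a \<Rightarrow> 'b::ring_1" and flip :: "'b \<Rightarrow> 'b" and Tr :: "'b \<Rightarrow> complex"
  assumes tau_add: "\<tau> (x + y) = \<tau> x + \<tau> y"
    and tau_emb_mult: "\<tau> (emb c * x) = c * \<tau> x"
    and tau_commute: "\<tau> (x * y) = \<tau> (y * x)"
    and tau_faithful: "\<tau> (st x * x) = 0 \<Longrightarrow> x = 0"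
    and tens_emb_swap: "tens (emb c * x) y = tens x (emb c * y)"
    and tens_one: "tens 1 1 = 1"
    and tens_mult: "tens a b * tens a' b' = tens (a * a') (b' * b)"
    and flip_add: "flip (X + Y) = flip X + flip Y"
    and flip_tens: "flip (tens a b) = tens b a"
    and flip_mult: "flip (X * Y) = flip Y * flip X"
    and Tr_add: "Tr (X + Y) = Tr X + Tr Y"
    and Tr_commute: "Tr (X * Y) = Tr (Y * X)"
    and cond_exp_exists: "\<exists>x. \<forall>a. \<tau> (a * x) = Tr (tens a 1 * X)"

lemma tracial_tensor_setting_imp_tracial_tensor:
  assumes "tracial_tensor_setting emb st \<tau> tens flip Tr"
  shows "tracial_tensor emb st \<tau> tens flip Tr"
  using assms unfolding tracial_tensor_setting_def
  by unfold_locales (elim conjE; fast)+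

context tracial_tensor
begin

lemma tau_0 [simp]: "\<tau> 0 = 0"
  using tau_add[of 0 0] by simp

lemma tau_sum: "\<tau> (\<Sum>s\<in>S. f s) = (\<Sum>s\<in>S. \<tau> (f s))"
  by (induction S rule: infinite_finite_induct) (simp_all add: tau_add)

lemma tau_mult_emb: "\<tau> (a * (emb c * x)) = c * \<tau> (a * x)"
  by (simp add: mult_emb_left_commute tau_emb_mult)

lemma Tr_0 [simp]: "Tr 0 = 0"
  using Tr_add[of 0 0] by simp

lemma flip_0 [simp]: "flip 0 = 0"
  using flip_add[of 0 0] by simp

lemma flip_sum: "flip (\<Sum>s\<in>S. f s) = (\<Sum>s\<in>S. flip (f s))"
  by (induction S rule: infinite_finite_induct) (simp_all add: flip_add)

lemma tens_power_left: "tens x 1 ^ n = tens (x ^ n) 1"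
  by (induction n) (simp_all add: tens_one tens_mult)

lemma tens_power_right: "tens 1 x ^ n = tens 1 (x ^ n)"
  by (induction n) (simp_all add: tens_one tens_mult power_Suc2[symmetric])

lemma tau_mult_left_inj:
  assumes "\<And>a. \<tau> (a * x) = \<tau> (a * y)"
  shows "x = y"
proof -
  have "\<tau> (st (x - y) * (x - y)) = 0"
    using assms[of "st (x - y)"] tau_add[of "st (x - y) * (x - y)" "st (x - y) * y"]
    by (simp add: right_diff_distrib)
  then show ?thesis
    using tau_faithful[of "x - y"] by simp
qed

lemma the_tau_eqI:
  assumes "\<And>a. \<tau> (a * x) = f a"
  shows "(THE x. \<forall>a. \<tau> (a * x) = f a) = x"
  using assms tau_mult_left_inj by (intro the_equality) auto

definition cond_exp :: "'b \<Rightarrow> 'a" where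
  "cond_exp X = (THE x. \<forall>a. \<tau> (a * x) = Tr (tens a 1 * X))"

lemma cond_exp_eqI: "(\<And>a. \<tau> (a * x) = Tr (tens a 1 * X)) \<Longrightarrow> cond_exp X = x"
  unfolding cond_exp_def by (rule the_tau_eqI)

lemma tau_cond_exp: "\<tau> (a * cond_exp X) = Tr (tens a 1 * X)"
proof -
  obtain x where "\<And>a. \<tau> (a * x) = Tr (tens a 1 * X)"
    using cond_exp_exists by blast
  then show ?thesis
    using cond_exp_eqI by metis
qed

lemma cond_exp_add: "cond_exp (X + Y) = cond_exp X + cond_exp Y"
  by (rule cond_exp_eqI) (simp add: distrib_left tau_add Tr_add tau_cond_exp)

lemma cond_exp_0 [simp]: "cond_exp 0 = 0"
  by (rule cond_exp_eqI) simp

lemma cond_exp_sum: "cond_exp (\<Sum>s\<in>S. f s) = (\<Sum>s\<in>S. cond_exp (f s))"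
  by (induction S rule: infinite_finite_induct) (simp_all add: cond_exp_add)

lemma cond_exp_tens_mult:
  "cond_exp (tens a b * X * tens c d) = a * cond_exp (X * tens 1 (b * d)) * c"
proof (rule cond_exp_eqI)
  fix a'
  let ?E = "cond_exp (X * tens 1 (b * d))"
  have "\<tau> (a' * (a * ?E * c)) = \<tau> (c * a' * a * ?E)"
    using tau_commute[of "a' * a * ?E" c] by (simp add: mult.assoc)
  also have "\<dots> = Tr (tens (c * a' * a) 1 * (X * tens 1 (b * d)))"
    by (rule tau_cond_exp)
  also have "\<dots> = Tr (tens (c * a' * a) (b * d) * X)"
    using Tr_commute[of "tens (c * a' * a) 1 * X" "tens 1 (b * d)"]
    by (simp add: mult.assoc[symmetric] tens_mult)
  also have "\<dots> = Tr (tens a' 1 * (tens a b * X * tens c d))"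
    using Tr_commute[of "tens a' 1 * tens a b * X" "tens c d"]
    by (simp add: mult.assoc[symmetric] tens_mult)
  finally show "\<tau> (a' * (a * ?E * c)) = Tr (tens a' 1 * (tens a b * X * tens c d))" .
qed

lemma Qtau_eq_cond_exp: "Qtau \<tau> Tr tens flip u v = cond_exp (u * flip v)"
  by (simp add: Qtau_def cond_exp_def mult.assoc)

lemma Delta_eq_Delta_sum:
  "Delta \<tau> Tr tens flip u v p m =
     Delta_sum (\<lambda>k. cond_exp ((u * flip v + v * flip u) * tens 1 (m ^ k))) p m"
  (is "_ = Delta_sum ?y p m")
proof -
  let ?W = "u * flip v + v * flip u"
  have tau_term: "\<tau> (a * (m ^ d1 * ?y d2 * m ^ d3)) =
      Tr (tens a 1 * tens m 1 ^ d1 * ?W * tens 1 m ^ d2 * tens m 1 ^ d3)" for a d1 d2 d3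
  proof -
    have "tens m 1 ^ d1 * ?W * tens 1 m ^ d2 * tens m 1 ^ d3 = tens (m ^ d1) 1 * ?W * tens (m ^ d3) (m ^ d2)"
      by (simp add: tens_power_left tens_power_right tens_mult mult.assoc)
    then have "m ^ d1 * ?y d2 * m ^ d3 = cond_exp (tens m 1 ^ d1 * ?W * tens 1 m ^ d2 * tens m 1 ^ d3)"
      by (simp add: cond_exp_tens_mult)
    then show ?thesis
      by (simp add: tau_cond_exp mult.assoc)
  qed
  show ?thesis
    unfolding Delta_def
    by (rule the_tau_eqI)
       (simp add: Delta_sum_def split_triples_def tau_sum tau_mult_emb sum_distrib_left tau_term split_def)
qed

lemma Qtau_add_eq_Q_sum:
  "Qtau \<tau> Tr tens flip (pdiff emb tens p m * u) (pdiff emb tens q m * v)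
   + Qtau \<tau> Tr tens flip (pdiff emb tens p m * v) (pdiff emb tens q m * u)
   = Q_sum (\<lambda>k. cond_exp ((u * flip v + v * flip u) * tens 1 (m ^ k))) p q m"
  (is "_ = Q_sum ?y p q m")
proof -
  let ?W = "u * flip v + v * flip u"
  let ?c = "\<lambda>i. emb (coeff p i)" and ?d = "\<lambda>j. emb (coeff q j)"
  have pdiff_p: "pdiff emb tens p m = (\<Sum>i\<le>degree p. \<Sum>(e1, e2)\<in>split_pairs i. tens (?c i * m ^ e1) (m ^ e2))"
    by (simp add: pdiff_def split_pairs_def)
  have flip_pdiff_q: "flip (pdiff emb tens q m) = (\<Sum>j\<le>degree q. \<Sum>(f1, f2)\<in>split_pairs j. tens (?d j * m ^ f2) (m ^ f1))"
    by (simp add: pdiff_def split_pairs_def flip_sum flip_tens tens_emb_swap split_def)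
  have cond_exp_term: "cond_exp (tens (emb c * x) b * ?W * tens (emb c' * z) b') =
      emb c * emb c' * (x * cond_exp (?W * tens 1 (b * b')) * z)" for c c' x z b b'
    unfolding cond_exp_tens_mult
    by (simp add: mult.assoc mult_emb_left_commute[of x]
        mult_emb_left_commute[of "cond_exp (?W * tens 1 (b * b'))"])
  have "Qtau \<tau> Tr tens flip (pdiff emb tens p m * u) (pdiff emb tens q m * v)
      + Qtau \<tau> Tr tens flip (pdiff emb tens p m * v) (pdiff emb tens q m * u)
      = cond_exp (pdiff emb tens p m * ?W * flip (pdiff emb tens q m))"
    by (simp add: Qtau_eq_cond_exp cond_exp_add[symmetric] flip_mult distrib_left distrib_right mult.assoc)
  also have "\<dots> = (\<Sum>i\<le>degree p. \<Sum>(e1, e2)\<in>split_pairs i. \<Sum>j\<le>degree q. \<Sum>(f1, f2)\<in>split_pairs j.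
      cond_exp (tens (?c i * m ^ e1) (m ^ e2) * ?W * tens (?d j * m ^ f2) (m ^ f1)))"
    unfolding pdiff_p sum_distrib_right
    unfolding flip_pdiff_q sum_distrib_left
    by (simp add: cond_exp_sum split_def)
  also have "\<dots> = (\<Sum>i\<le>degree p. \<Sum>(e1, e2)\<in>split_pairs i. \<Sum>j\<le>degree q. \<Sum>(f1, f2)\<in>split_pairs j.
      ?c i * ?d j * (m ^ e1 * ?y (e2 + f1) * m ^ f2))"
    by (simp add: cond_exp_term power_add)
  also have "\<dots> = Q_sum ?y p q m"
    unfolding Q_sum_def split_def sum_distrib_left
    by (rule sum.cong[OF refl], rule sum.swap)
  finally show ?thesis .
qed

end

theorem lemma3p4p3:
  fixes emb :: "complex \<Rightarrow> 'a::ring_1" and st :: "'a \<Rightarrow> 'a" and \<tau> :: "'a \<Rightarrow> complex"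
    and tens :: "'a \<Rightarrow> 'a \<Rightarrow> 'b::ring_1" and flip :: "'b \<Rightarrow> 'b" and Tr :: "'b \<Rightarrow> complex"
    and p q :: "complex poly" and m :: 'a and u v :: 'b
  assumes "tracial_tensor_setting emb st \<tau> tens flip Tr"
  shows "Delta \<tau> Tr tens flip u v (p * q) m =
           Delta \<tau> Tr tens flip u v p m * peval emb q m
         + peval emb p m * Delta \<tau> Tr tens flip u v q m
         + Qtau \<tau> Tr tens flip (pdiff emb tens p m * u) (pdiff emb tens q m * v)
         + Qtau \<tau> Tr tens flip (pdiff emb tens p m * v) (pdiff emb tens q m * u)"
proof -
  interpret tracial_tensor emb st \<tau> tens flip Tr
    using assms by (rule tracial_tensor_setting_imp_tracial_tensor)
  define y where "y k = cond_exp ((u * flip v + v * flip u) * tens 1 (m ^ k))" for k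
  show ?thesis
    using Delta_sum_mult[of y p q m] Qtau_add_eq_Q_sum[of p m u q v]
    by (simp add: Delta_eq_Delta_sum y_def[abs_def] add.assoc)
qed

end
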